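(* Let $P$ be a set of $n\geq 5$ points in general position in the plane, let $\mathcal{P}$ be the set of all closed segments with both endpoints in $P$, let $\mathcal{S}\subseteq\mathcal{P}$ with $s:=|\mathcal{S}|$, and let $\mathcal{P}':=\mathcal{P}\setminus\mathcal{S}$. Suppose that every pair of distinct segments $a,b\in\mathcal{P}'$ satisfies exactly one of the following: (1) $d_{D(P)}(a,b)=1$ (equivalently $a\cap b=\emptyset$); (2) $d_{D(P)}(a,b)=2$ and there is $f_1\in\mathcal{S}$ with $(a\cup b)\cap f_1=\emptyset$; (3) $d_{D(P)}(a,b)=3$ and there are $f_1,f_2\in\mathcal{S}$ with $a\cap f_1=\emptyset$, $f_1\cap f_2=\emptyset$ and $f_2\cap b=\emptyset$; (4) $d_{D(P)}(a,b)=4$, $n=5$, and there are $f_1,f_2,f_3\in\mathcal{S}$ such that $a\cap f_1=\emptyset=f_3\cap b$, $a\cap h\neq\emptyset$ for $h\in\{f_2,f_3\}$, $b\cap h\neq\emptyset$ for $h\in\{f_1,f_2\}$, $f_i\cap f_{i+1}=\emptyset$ for $i\in\{1,2\}$, and $f_1\cap f_3\neq\emptyset$. Then $\mu(D(P))\geq\binom{n}{2}-s$.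
   Context: General position means no three points collinear. $D(P)$ is the graph with vertex set $\mathcal{P}$, two segments adjacent iff they are disjoint; $d_{D(P)}$ is graph distance in $D(P)$. For a graph $G$ and $U\subseteq V(G)$, two distinct vertices $x,y\in U$ are $U$-mutually visible if $G$ contains a shortest $x$-$y$ path none of whose internal vertices lies in $U$; $U$ is a mutual-visibility set if every two distinct vertices of $U$ are $U$-mutually visible. $\mu(G)$ is the maximum size of a mutual-visibility set of $G$. *)

theory Defs
  imports "HOL-Analysis.Analysis" "HOL-Library.Extended_Nat"
begin

definition is_walk :: "'v set \<Rightarrow> ('v \<Rightarrow> 'v \<Rightarrow> bool) \<Rightarrow> 'v list \<Rightarrow> 'v \<Rightarrow> 'v \<Rightarrow> bool" where
  "is_walk V adj xs x y \<longleftrightarrow> xs \<noteq> [] \<and> hd xs = x \<and> last xs = y \<and> set xs \<subseteq> V \<and>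
     (\<forall>i. Suc i < length xs \<longrightarrow> adj (xs ! i) (xs ! Suc i))"

(* graph distance (infinity if no walk exists); length of a walk = number of edges *)
definition gdist :: "'v set \<Rightarrow> ('v \<Rightarrow> 'v \<Rightarrow> bool) \<Rightarrow> 'v \<Rightarrow> 'v \<Rightarrow> enat" where
  "gdist V adj x y = (INF xs \<in> {xs. is_walk V adj xs x y}. enat (length xs - 1))"

definition is_shortest_path :: "'v set \<Rightarrow> ('v \<Rightarrow> 'v \<Rightarrow> bool) \<Rightarrow> 'v list \<Rightarrow> 'v \<Rightarrow> 'v \<Rightarrow> bool" where
  "is_shortest_path V adj xs x y \<longleftrightarrow> is_walk V adj xs x y \<and> enat (length xs - 1) = gdist V adj x y"

definition mutually_visible :: "'v set \<Rightarrow> ('v \<Rightarrow> 'v \<Rightarrow> bool) \<Rightarrow> 'v set \<Rightarrow> 'v \<Rightarrow> 'v \<Rightarrow> bool" where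
  "mutually_visible V adj U x y \<longleftrightarrow>
     (\<exists>xs. is_shortest_path V adj xs x y \<and> set (butlast (tl xs)) \<inter> U = {})"

definition mutual_visibility_set :: "'v set \<Rightarrow> ('v \<Rightarrow> 'v \<Rightarrow> bool) \<Rightarrow> 'v set \<Rightarrow> bool" where
  "mutual_visibility_set V adj U \<longleftrightarrow> U \<subseteq> V \<and>
     (\<forall>x\<in>U. \<forall>y\<in>U. x \<noteq> y \<longrightarrow> mutually_visible V adj U x y)"

definition mu :: "'v set \<Rightarrow> ('v \<Rightarrow> 'v \<Rightarrow> bool) \<Rightarrow> nat" where
  "mu V adj = Max (card ` {U. mutual_visibility_set V adj U})"

definition general_position :: "(real^2) set \<Rightarrow> bool" where
  "general_position P \<longleftrightarrow>
     (\<forall>a\<in>P. \<forall>b\<in>P. \<forall>c\<in>P. a \<noteq> b \<and> a \<noteq> c \<and> b \<noteq> c \<longrightarrow> \<not> collinear {a, b, c})"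

definition segments :: "(real^2) set \<Rightarrow> (real^2) set set" where
  "segments P = {closed_segment p q | p q. p \<in> P \<and> q \<in> P \<and> p \<noteq> q}"

definition disj_adj :: "(real^2) set \<Rightarrow> (real^2) set \<Rightarrow> bool" where
  "disj_adj a b \<longleftrightarrow> a \<inter> b = {}"

end

theory Submission
  imports Defs
begin

text \<open>Each alternative of the hypothesis on a pair \<open>a, b\<close> of segments outside \<open>S\<close> exhibits a
  shortest \<open>a\<close>-\<open>b\<close> path in \<open>D(P)\<close> whose internal vertices all lie in \<open>S\<close>: the direct edge,
  or the path through \<open>f\<^sub>1\<close>, \<open>f\<^sub>1 f\<^sub>2\<close>, resp. \<open>f\<^sub>1 f\<^sub>2 f\<^sub>3\<close>. Hence the complement of \<open>S\<close> is a
  mutual-visibility set, of size \<open>(n choose 2) - s\<close>.\<close>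

lemma is_walk_singleton [simp]: "is_walk V adj [x] x x \<longleftrightarrow> x \<in> V"
  by (simp add: is_walk_def)

lemma is_walk_Cons_Cons [simp]:
  "is_walk V adj (x # y # ys) x z \<longleftrightarrow> x \<in> V \<and> adj x y \<and> is_walk V adj (y # ys) y z"
proof -
  let ?xs = "x # y # ys"
  have "(\<forall>i. Suc i < length ?xs \<longrightarrow> adj (?xs ! i) (?xs ! Suc i))
    \<longleftrightarrow> adj x y \<and> (\<forall>i. Suc i < length (y # ys) \<longrightarrow> adj ((y # ys) ! i) ((y # ys) ! Suc i))"
    (is "?L \<longleftrightarrow> _ \<and> ?R")
  proof (intro iffI conjI allI impI)
    assume ?L
    show "adj x y" using spec[OF \<open>?L\<close>, of 0] by simp
    fix i assume "Suc i < length (y # ys)"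
    then show "adj ((y # ys) ! i) ((y # ys) ! Suc i)" using spec[OF \<open>?L\<close>, of "Suc i"] by simp
  next
    fix i assume "adj x y \<and> ?R" "Suc i < length ?xs"
    then show "adj (?xs ! i) (?xs ! Suc i)" by (cases i) auto
  qed
  then show ?thesis
    by (auto simp: is_walk_def)
qed

lemma shortest_path_of_gdist_enat:
  assumes "gdist V adj x y = enat k"
  obtains xs where "is_shortest_path V adj xs x y" "length xs = Suc k"
proof -
  let ?lens = "(\<lambda>xs. enat (length xs - 1)) ` {xs. is_walk V adj xs x y}"
  have "?lens \<noteq> {}"
  proof
    assume "?lens = {}"
    then have "gdist V adj x y = \<infinity>" by (simp add: gdist_def top_enat_def)
    with assms show False by simp
  qed
  then have "Inf ?lens \<in> ?lens"
    by (auto intro: wellorder_InfI)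
  then obtain xs where "is_walk V adj xs x y" "enat (length xs - 1) = gdist V adj x y"
    unfolding gdist_def by auto
  moreover from this have "length xs = Suc k"
    using assms by (cases xs) (auto simp: is_walk_def)
  ultimately show ?thesis
    using that by (simp add: is_shortest_path_def)
qed

lemma mutual_visibility_set_Diff:
  assumes "S \<subseteq> V"
    and "\<And>a b. a \<in> V - S \<Longrightarrow> b \<in> V - S \<Longrightarrow> a \<noteq> b \<Longrightarrow>
           \<exists>xs. is_shortest_path V adj xs a b \<and> set (butlast (tl xs)) \<subseteq> S"
  shows "mutual_visibility_set V adj (V - S)"
  using assms unfolding mutual_visibility_set_def mutually_visible_def by blast

lemma card_le_mu:
  assumes "finite V" "mutual_visibility_set V adj U"
  shows "card U \<le> mu V adj"
proof -
  have "{U. mutual_visibility_set V adj U} \<subseteq> Pow V"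
    by (auto simp: mutual_visibility_set_def)
  then have "finite (card ` {U. mutual_visibility_set V adj U})"
    using assms(1) by (meson finite_Pow_iff finite_imageI finite_subset)
  then show ?thesis
    unfolding mu_def using assms(2) by (auto intro: Max_ge)
qed

lemma segments_eq_convex_hull_2_subsets:
  "segments P = (\<lambda>B. convex hull B) ` {B. B \<subseteq> P \<and> card B = 2}"
  by (auto simp: segments_def card_2_iff segment_convex_hull)

lemma inj_on_convex_hull_2_subsets:
  "inj_on (\<lambda>B. convex hull B) {B :: 'a::euclidean_space set. card B = 2}"
  by (rule inj_onI) (auto simp: card_2_iff segment_convex_hull[symmetric])

lemma finite_segments: "finite P \<Longrightarrow> finite (segments P)"
  by (simp add: segments_eq_convex_hull_2_subsets)

lemma card_segments: "finite P \<Longrightarrow> card (segments P) = card P choose 2"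
  unfolding segments_eq_convex_hull_2_subsets
  by (subst card_image) (auto intro: inj_on_subset[OF inj_on_convex_hull_2_subsets] simp: n_subsets)

theorem lemma7:
  fixes P :: "(real^2) set" and S :: "(real^2) set set"
  assumes finP: "finite P"
    and n5: "card P \<ge> 5"
    and gp: "general_position P"
    and SsubP: "S \<subseteq> segments P"
    and pairs: "\<forall>a\<in>segments P - S. \<forall>b\<in>segments P - S. a \<noteq> b \<longrightarrow>
       (gdist (segments P) disj_adj a b = 1)
     \<or> (gdist (segments P) disj_adj a b = 2 \<and> (\<exists>f1\<in>S. (a \<union> b) \<inter> f1 = {}))
     \<or> (gdist (segments P) disj_adj a b = 3 \<and>
          (\<exists>f1\<in>S. \<exists>f2\<in>S. a \<inter> f1 = {} \<and> f1 \<inter> f2 = {} \<and> f2 \<inter> b = {}))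
     \<or> (gdist (segments P) disj_adj a b = 4 \<and> card P = 5 \<and>
          (\<exists>f1\<in>S. \<exists>f2\<in>S. \<exists>f3\<in>S. a \<inter> f1 = {} \<and> f3 \<inter> b = {} \<and>
             a \<inter> f2 \<noteq> {} \<and> a \<inter> f3 \<noteq> {} \<and> b \<inter> f1 \<noteq> {} \<and> b \<inter> f2 \<noteq> {} \<and>
             f1 \<inter> f2 = {} \<and> f2 \<inter> f3 = {} \<and> f1 \<inter> f3 \<noteq> {}))"
  shows "int (mu (segments P) disj_adj) \<ge> int (card P choose 2) - int (card S)"
proof -
  let ?V = "segments P"
  have "mutual_visibility_set ?V disj_adj (?V - S)"
  proof (rule mutual_visibility_set_Diff[OF SsubP])
    fix a b assume a: "a \<in> ?V - S" and b: "b \<in> ?V - S" and "a \<noteq> b"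
    with pairs show "\<exists>xs. is_shortest_path ?V disj_adj xs a b \<and> set (butlast (tl xs)) \<subseteq> S"
    proof (elim ballE impE disjE conjE bexE)
      assume "gdist ?V disj_adj a b = 1"
      then obtain xs where "is_shortest_path ?V disj_adj xs a b" "length xs = 2"
        by (auto simp: one_enat_def elim: shortest_path_of_gdist_enat)
      moreover from \<open>length xs = 2\<close> have "butlast (tl xs) = []"
        by (simp flip: length_0_conv)
      ultimately show ?thesis
        by auto
    next
      fix f1 assume "gdist ?V disj_adj a b = 2" "f1 \<in> S" "(a \<union> b) \<inter> f1 = {}"
      then show ?thesis using a b SsubP
        by (intro exI[of _ "[a, f1, b]"])
           (auto simp: is_shortest_path_def disj_adj_def numeral_eq_enat)
    next
      fix f1 f2 assume "gdist ?V disj_adj a b = 3" "f1 \<in> S" "f2 \<in> S"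
        "a \<inter> f1 = {}" "f1 \<inter> f2 = {}" "f2 \<inter> b = {}"
      then show ?thesis using a b SsubP
        by (intro exI[of _ "[a, f1, f2, b]"])
           (auto simp: is_shortest_path_def disj_adj_def numeral_eq_enat)
    next
      fix f1 f2 f3 assume "gdist ?V disj_adj a b = 4" "f1 \<in> S" "f2 \<in> S" "f3 \<in> S"
        "a \<inter> f1 = {}" "f1 \<inter> f2 = {}" "f2 \<inter> f3 = {}" "f3 \<inter> b = {}"
      then show ?thesis using a b SsubP
        by (intro exI[of _ "[a, f1, f2, f3, b]"])
           (auto simp: is_shortest_path_def disj_adj_def numeral_eq_enat)
    qed auto
  qed
  then have "card (?V - S) \<le> mu ?V disj_adj"
    by (rule card_le_mu[OF finite_segments[OF finP]])
  moreover have "card (?V - S) = card ?V - card S" and "card S \<le> card ?V"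
    using SsubP finite_segments[OF finP] by (auto simp: card_Diff_subset finite_subset card_mono)
  ultimately show ?thesis
    using card_segments[OF finP] by linarith
qed

end
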